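(* Let $\ell>r\ge 2$ be integers and let $m=m_{r,\ell}$. Then (i) $m>\max\left\{\frac{\ell(r-1)}{2(\ell-r)},\,r-1\right\}$; and (ii) $m<\min\left\{\frac{\ell(\ell-1)}{2(\ell-r)},\,\frac{r}{\alpha}\right\}$, where $\alpha=\alpha(\ell/r)$ is the unique positive real root of the equation $e^{(\ell/r)x}(1-x)=1$, and $\alpha\in(1-r^2/\ell^2,\,1)$. In particular, $m<\frac{r\ell^2}{\ell^2-r^2}$.
   Context: $m_{r,\ell}$ is the unique integer $k\ge r$ maximizing $f(k)=\frac{(k-1)(k-2)\cdots(k-r+1)}{k^{\ell-1}}$ over all integers $k\ge r$. *)

theory Defs
  imports Complex_Main
begin

definition f_rl :: "nat \<Rightarrow> nat \<Rightarrow> nat \<Rightarrow> real" where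
  "f_rl r l k = (\<Prod>i=1..r-1. real k - real i) / real k ^ (l - 1)"

definition m_rl :: "nat \<Rightarrow> nat \<Rightarrow> nat" where
  "m_rl r l = (THE k. r \<le> k \<and> (\<forall>j. r \<le> j \<longrightarrow> f_rl r l j \<le> f_rl r l k))"

definition alpha_root :: "real \<Rightarrow> real" where
  "alpha_root c = (THE x. x > 0 \<and> exp (c * x) * (1 - x) = 1)"

end

theory Submission
  imports Defs "HOL-Real_Asymp.Real_Asymp"
begin

(*
  With Q(k) = k^l - (k - r + 1) (k + 1)^(l - 1), the difference f(k + 1) - f(k) has the sign
  of Q(k), which is also the sign of F(k) = l ln k - ln (k - r + 1) - (l - 1) ln (k + 1).
  F decreases up to K = l (r - 1) / (l - r) and then increases to its limit 0, and Q never
  vanishes because k is coprime to k + 1.  So f is unimodal and m is the first k \<ge> r with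
  Q(k) < 0.  Comparing F' with the derivative of a rational function gives
  F(x) \<ge> C (K/2 - x) / x^2 with C > 0, whence m > K/2.  Conversely Q(m - 1) > 0 (or m = r)
  yields (1 - 1/m)^l > 1 - r/m; bounding the left side by 1 - l/m + l (l - 1) / (2 m^2) gives
  the quadratic bound, and bounding it by exp (-l/m) says e^(c x) (1 - x) < 1 at x = r/m with
  c = l/r, i.e. alpha < r/m.  Finally e^(c x) (1 - x) increases on [0, 1 - 1/c], decreases
  afterwards, and exceeds 1 at x = 1 - 1/c^2 because 2 ln c < c - 1/c.
*)

lemma the_argmax_unimodal:
  fixes s :: "nat \<Rightarrow> 'a::linordered_ab_group_add"
  assumes "a \<le> p"
    and up: "\<And>i. a \<le> i \<Longrightarrow> i < p \<Longrightarrow> s i < s (Suc i)"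
    and down: "\<And>i. p \<le> i \<Longrightarrow> s (Suc i) < s i"
  shows "(THE k. a \<le> k \<and> (\<forall>j. a \<le> j \<longrightarrow> s j \<le> s k)) = p"
proof -
  have less_p: "s j < s p" if "a \<le> j" "j \<noteq> p" for j
  proof (cases "j < p")
    case True
    then show ?thesis
      using lift_Suc_mono_less_ivl[of "{a..<p}" s j p] up that(1) by auto
  next
    case False
    then have "p < j"
      using that(2) by simp
    then show ?thesis
      using lift_Suc_mono_less_ivl[of "{p..}" "\<lambda>i. - s i" p j] down by force
  qed
  show ?thesis
  proof (rule the_equality)
    show "a \<le> p \<and> (\<forall>j. a \<le> j \<longrightarrow> s j \<le> s p)"
      using assms(1) less_p by (auto intro: less_imp_le)
  next
    fix k
    assume "a \<le> k \<and> (\<forall>j. a \<le> j \<longrightarrow> s j \<le> s k)"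
    then show "k = p"
      using assms(1) less_p by (meson not_less)
  qed
qed

lemma prod_diff_shift:
  fixes x :: "'a::comm_ring_1"
  shows "(\<Prod>i=1..n. (x + 1) - of_nat i) * (x - of_nat n) = x * (\<Prod>i=1..n. x - of_nat i)"
proof (induction n)
  case (Suc n)
  have "(\<Prod>i=1..Suc n. (x + 1) - of_nat i) * (x - of_nat (Suc n))
      = ((\<Prod>i=1..n. (x + 1) - of_nat i) * (x - of_nat n)) * (x - of_nat (Suc n))"
    by (simp add: prod.cl_ivl_Suc algebra_simps)
  also have "\<dots> = x * (\<Prod>i=1..Suc n. x - of_nat i)"
    using Suc by (simp add: prod.cl_ivl_Suc mult.assoc)
  finally show ?case .
qed simp

lemma one_minus_power_le_second_order:
  fixes u :: real
  assumes "0 \<le> u" "u \<le> 1"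
  shows "(1 - u) ^ n \<le> 1 - real n * u + real n * (real n - 1) / 2 * u^2"
proof (induction n)
  case (Suc n)
  have "(1 - u) ^ Suc n \<le> (1 - u) * (1 - real n * u + real n * (real n - 1) / 2 * u^2)"
    using Suc assms by (simp add: mult_left_mono)
  also have "\<dots> = 1 - real (Suc n) * u + real (Suc n) * (real (Suc n) - 1) / 2 * u^2
      - real n * (real n - 1) / 2 * u^3"
    by (simp add: field_simps power2_eq_square power3_eq_cube)
  also have "\<dots> \<le> 1 - real (Suc n) * u + real (Suc n) * (real (Suc n) - 1) / 2 * u^2"
    using assms by (cases n) auto
  finally show ?case .
qed simp

lemma ln_less_half_diff_inverse:
  fixes c :: real
  assumes "1 < c"
  shows "ln c < (c - 1 / c) / 2"
proof -
  define g where "g x = x - 1 / x - 2 * ln x" for x :: real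
  have "g 1 < g c"
  proof (rule DERIV_pos_imp_increasing_open[OF assms])
    fix x :: real
    assume x: "1 < x" "x < c"
    then have "(g has_real_derivative (x - 1)^2 / x^2) (at x)"
      unfolding g_def[abs_def]
      by (auto intro!: derivative_eq_intros simp: field_simps power2_eq_square)
    moreover have "0 < (x - 1)^2 / x^2"
      using x by simp
    ultimately show "\<exists>y. (g has_real_derivative y) (at x) \<and> 0 < y"
      by blast
  next
    show "continuous_on {1..c} g"
      unfolding g_def[abs_def] by (intro continuous_intros) auto
  qed
  then show ?thesis
    unfolding g_def by simp
qed

text \<open>For natural numbers \<open>r \<le> k\<close>, \<open>log_step r l k = ln (f_rl r l (k + 1) / f_rl r l k)\<close>.\<close>

definition log_step :: "real \<Rightarrow> real \<Rightarrow> real \<Rightarrow> real" where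
  "log_step r l k = l * ln k - ln (k - r + 1) - (l - 1) * ln (k + 1)"

definition turning_point :: "real \<Rightarrow> real \<Rightarrow> real" where
  "turning_point r l = l * (r - 1) / (l - r)"

definition deriv_weight :: "real \<Rightarrow> real \<Rightarrow> real" where
  "deriv_weight r k = k^2 / ((k + 1) * (k - r + 1))"

lemma deriv_weight_pos:
  assumes "1 \<le> r" "r - 1 < k"
  shows "0 < deriv_weight r k"
  using assms unfolding deriv_weight_def by (intro divide_pos_pos mult_pos_pos) auto

lemma deriv_weight_antimono:
  assumes "2 \<le> r" "r - 1 < k" "k \<le> k'"
  shows "deriv_weight r k' \<le> deriv_weight r k"
proof -
  have "k'^2 * ((k + 1) * (k - r + 1)) \<le> k^2 * ((k' + 1) * (k' - r + 1))"
  proof -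
    have "k^2 * ((k' + 1) * (k' - r + 1)) - k'^2 * ((k + 1) * (k - r + 1))
        = (k' - k) * ((r - 2) * k * k' + (r - 1) * (k + k'))"
      by (simp add: power2_eq_square algebra_simps)
    moreover have "0 \<le> (k' - k) * ((r - 2) * k * k' + (r - 1) * (k + k'))"
      using assms by (intro mult_nonneg_nonneg add_nonneg_nonneg) auto
    ultimately show ?thesis by linarith
  qed
  moreover have "0 < (k + 1) * (k - r + 1)" "0 < (k' + 1) * (k' - r + 1)"
    using assms by auto
  ultimately show ?thesis
    unfolding deriv_weight_def by (simp add: divide_simps mult.commute)
qed

lemma log_step_has_derivative:
  assumes "1 \<le> r" "r < l" "r - 1 < k"
  shows "(log_step r l has_real_derivative
           (l - r) * (k - turning_point r l) * deriv_weight r k / k^3) (at k)"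
proof -
  have "(log_step r l has_real_derivative l / k - 1 / (k - r + 1) - (l - 1) / (k + 1)) (at k)"
    unfolding log_step_def using assms by (auto intro!: derivative_eq_intros)
  moreover have "l / k - 1 / (k - r + 1) - (l - 1) / (k + 1)
      = (l - r) * (k - turning_point r l) * deriv_weight r k / k^3"
  proof -
    define t where "t = k - r + 1"
    have nz: "k \<noteq> 0" "k + 1 \<noteq> 0" "t \<noteq> 0"
      using assms unfolding t_def by auto
    have "l / k - 1 / t - (l - 1) / (k + 1) = ((l - r) * k - l * (r - 1)) / (k * (k + 1) * t)"
    proof -
      have r: "r = k + 1 - t"
        unfolding t_def by simp
      from nz show ?thesis
        unfolding r by (simp add: field_simps)
    qed
    moreover have "(l - r) * k - l * (r - 1) = (l - r) * (k - turning_point r l)"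
      using assms unfolding turning_point_def by (simp add: field_simps)
    moreover have "deriv_weight r k / k^3 = 1 / (k * (k + 1) * t)"
      using nz unfolding deriv_weight_def t_def[symmetric]
      by (simp add: power2_eq_square power3_eq_cube)
    ultimately show ?thesis
      unfolding t_def by (metis times_divide_eq_right mult_1_right)
  qed
  ultimately show ?thesis by simp
qed

lemma has_real_derivative_comparison:
  fixes C a y :: real
  assumes "y \<noteq> 0"
  shows "((\<lambda>y. C * (a - y) / y^2) has_real_derivative C * (y - 2 * a) / y^3) (at y)"
proof -
  have "((\<lambda>y. C * (a - y) / y^2) has_real_derivative
      (C * (- 1) * y^2 - C * (a - y) * (2 * y)) / (y^2)^2) (at y)"
    using assms by (auto intro!: derivative_eq_intros simp: power2_eq_square)
  moreover have "(C * (- 1) * y^2 - C * (a - y) * (2 * y)) / (y^2)^2 = C * (y - 2 * a) / y^3"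
    using assms by (simp add: field_simps power2_eq_square power3_eq_cube)
  ultimately show ?thesis
    by simp
qed

lemma log_step_tendsto_0: "(log_step r l \<longlongrightarrow> 0) at_top"
  unfolding log_step_def by real_asymp

context
  fixes r l :: real
  assumes r_gt_1: "1 < r" and r_less_l: "r < l"
begin

lemma turning_point_gt: "r - 1 < turning_point r l"
proof -
  have "(r - 1) * (l - r) < l * (r - 1)"
    using r_gt_1 r_less_l by (simp add: algebra_simps)
  then show ?thesis
    unfolding turning_point_def using r_less_l by (simp add: field_simps)
qed

lemma log_step_antimono:
  assumes "r - 1 < a" "a \<le> b" "b \<le> turning_point r l"
  shows "log_step r l b \<le> log_step r l a"
proof (rule DERIV_nonpos_imp_nonincreasing[OF \<open>a \<le> b\<close>])
  fix x
  assume x: "a \<le> x" "x \<le> b"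
  have "(l - r) * (x - turning_point r l) * deriv_weight r x / x^3 \<le> 0"
    using x assms r_gt_1 r_less_l deriv_weight_pos[of r x]
    by (intro divide_nonpos_pos mult_nonpos_nonneg mult_nonneg_nonpos) auto
  then show "\<exists>y. (log_step r l has_real_derivative y) (at x) \<and> y \<le> 0"
    using log_step_has_derivative[of r l x] x assms r_gt_1 r_less_l by auto
qed

lemma log_step_strict_mono:
  assumes "turning_point r l \<le> a" "a < b"
  shows "log_step r l a < log_step r l b"
proof (rule DERIV_pos_imp_increasing_open[OF \<open>a < b\<close>])
  fix x
  assume x: "a < x" "x < b"
  then have "r - 1 < x"
    using assms turning_point_gt by linarith
  moreover have "0 < (l - r) * (x - turning_point r l) * deriv_weight r x / x^3"
    using x assms \<open>r - 1 < x\<close> r_gt_1 r_less_l deriv_weight_pos[of r x]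
    by (intro divide_pos_pos mult_pos_pos) auto
  ultimately show "\<exists>y. (log_step r l has_real_derivative y) (at x) \<and> 0 < y"
    using log_step_has_derivative[of r l x] r_gt_1 r_less_l by auto
next
  have "isCont (log_step r l) x" if "x \<in> {a..b}" for x
    using that assms turning_point_gt r_gt_1 r_less_l
    by (intro DERIV_isCont[OF log_step_has_derivative]) auto
  then show "continuous_on {a..b} (log_step r l)"
    by (simp add: continuous_at_imp_continuous_on)
qed

lemma log_step_neg:
  assumes "turning_point r l \<le> x"
  shows "log_step r l x < 0"
proof -
  have "log_step r l (x + 1) \<le> 0"
  proof (rule tendsto_lowerbound[OF log_step_tendsto_0])
    show "\<forall>\<^sub>F y in at_top. log_step r l (x + 1) \<le> log_step r l y"
      unfolding eventually_at_top_linorder using assms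
      by (auto intro!: exI[of _ "x + 2"] less_imp_le log_step_strict_mono)
  qed simp
  moreover have "log_step r l x < log_step r l (x + 1)"
    using assms by (intro log_step_strict_mono) auto
  ultimately show ?thesis by linarith
qed

lemma log_step_minus_comparison_deriv_nonpos:
  assumes "2 \<le> r" "r - 1 < y"
  defines "K \<equiv> turning_point r l"
  defines "C \<equiv> (l - r) * deriv_weight r K"
  shows "\<exists>d. ((\<lambda>y. log_step r l y - C * (K / 2 - y) / y^2) has_real_derivative d) (at y) \<and> d \<le> 0"
proof -
  have "y \<noteq> 0"
    using assms(2) r_gt_1 by auto
  then have "((\<lambda>y. C * (K / 2 - y) / y^2) has_real_derivative C * (y - K) / y^3) (at y)"
    using has_real_derivative_comparison[of y C "K / 2"] by simp
  then have "((\<lambda>y. log_step r l y - C * (K / 2 - y) / y^2) has_real_derivative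
      (l - r) * (y - K) * deriv_weight r y / y^3 - C * (y - K) / y^3) (at y)"
    unfolding K_def using assms(2) r_gt_1 r_less_l
    by (intro DERIV_diff log_step_has_derivative) auto
  moreover have "(l - r) * (y - K) * deriv_weight r y / y^3 - C * (y - K) / y^3
      = (l - r) / y^3 * ((y - K) * (deriv_weight r y - deriv_weight r K))"
    unfolding C_def
    by (simp only: times_divide_eq_left times_divide_eq_right diff_divide_distrib[symmetric])
      (simp add: algebra_simps)
  moreover have "(y - K) * (deriv_weight r y - deriv_weight r K) \<le> 0"
  proof (cases "y \<le> K")
    case True
    then have "deriv_weight r K \<le> deriv_weight r y"
      using assms(1,2) by (intro deriv_weight_antimono) auto
    with True show ?thesis
      by (intro mult_nonpos_nonneg) auto
  next
    case False
    then have "deriv_weight r y \<le> deriv_weight r K"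
      using assms(1) turning_point_gt[folded K_def] by (intro deriv_weight_antimono) auto
    with False show ?thesis
      by (intro mult_nonneg_nonpos) auto
  qed
  then have "(l - r) / y^3 * ((y - K) * (deriv_weight r y - deriv_weight r K)) \<le> 0"
    using assms(2) r_gt_1 r_less_l by (intro mult_nonneg_nonpos[of "(l - r) / y^3"]) auto
  ultimately show ?thesis
    by auto
qed

lemma log_step_ge_comparison:
  assumes "2 \<le> r" "r - 1 < x"
  defines "K \<equiv> turning_point r l"
  shows "(l - r) * deriv_weight r K * (K / 2 - x) / x^2 \<le> log_step r l x"
proof -
  define C where "C = (l - r) * deriv_weight r K"
  define G where "G y = log_step r l y - C * (K / 2 - y) / y^2" for y
  have "(G \<longlongrightarrow> 0) at_top"
  proof -
    have "((\<lambda>y. C * (K / 2 - y) / y^2) \<longlongrightarrow> 0) at_top"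
      by real_asymp
    from tendsto_diff[OF log_step_tendsto_0 this] show ?thesis
      unfolding G_def[abs_def] by simp
  qed
  moreover have "\<forall>\<^sub>F y in at_top. G y \<le> G x"
    unfolding eventually_at_top_linorder
  proof (intro exI allI impI)
    fix y
    assume "x \<le> y"
    then show "G y \<le> G x"
    proof (rule DERIV_nonpos_imp_nonincreasing)
      fix z
      assume "x \<le> z" "z \<le> y"
      with assms show "\<exists>d. (G has_real_derivative d) (at z) \<and> d \<le> 0"
        unfolding G_def[abs_def] C_def K_def
        by (intro log_step_minus_comparison_deriv_nonpos) auto
    qed
  qed
  ultimately have "0 \<le> G x"
    by (rule tendsto_upperbound[OF _ _ trivial_limit_at_top_linorder])
  then show ?thesis
    unfolding G_def C_def by simp
qed

lemma half_turning_point_less: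
  assumes "2 \<le> r" "r - 1 < x" "log_step r l x < 0"
  shows "turning_point r l / 2 < x"
proof -
  define K where "K = turning_point r l"
  define C where "C = (l - r) * deriv_weight r K"
  have "0 < C"
    using r_gt_1 r_less_l turning_point_gt deriv_weight_pos[of r K]
    unfolding C_def K_def by simp
  have "C * (K / 2 - x) / x^2 < 0"
    using log_step_ge_comparison[OF assms(1,2)] assms(3) unfolding C_def K_def by linarith
  moreover have "0 < x^2"
    using assms(1,2) by simp
  ultimately have "C * (K / 2 - x) < 0"
    by (simp add: divide_less_0_iff)
  with \<open>0 < C\<close> have "K / 2 - x < 0"
    by (simp add: mult_less_0_iff)
  then show ?thesis
    unfolding K_def by simp
qed

end

definition psi :: "real \<Rightarrow> real \<Rightarrow> real" where
  "psi c x = exp (c * x) * (1 - x)"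

lemma psi_has_derivative: "(psi c has_real_derivative exp (c * x) * (c * (1 - x) - 1)) (at x)"
  unfolding psi_def by (auto intro!: derivative_eq_intros simp: algebra_simps)

lemma continuous_on_psi: "continuous_on S (psi c)"
  unfolding psi_def by (intro continuous_intros)

context
  fixes c :: real
  assumes c_gt_1: "1 < c"
begin

lemma psi_gt_1:
  assumes "0 < x" "x \<le> 1 - 1 / c"
  shows "1 < psi c x"
proof -
  have "psi c 0 < psi c x"
  proof (rule DERIV_pos_imp_increasing_open[OF assms(1) _ continuous_on_psi])
    fix y
    assume "0 < y" "y < x"
    then have "c * y < c * x"
      using c_gt_1 by simp
    moreover have "c * x \<le> c - 1"
      using assms(2) c_gt_1 by (simp add: field_simps)
    ultimately have "0 < c * (1 - y) - 1"
      by (simp add: right_diff_distrib)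
    then have "0 < exp (c * y) * (c * (1 - y) - 1)"
      by simp
    then show "\<exists>d. (psi c has_real_derivative d) (at y) \<and> 0 < d"
      using psi_has_derivative by blast
  qed
  then show ?thesis
    by (simp add: psi_def)
qed

lemma psi_strict_antimono:
  assumes "1 - 1 / c \<le> x" "x < y"
  shows "psi c y < psi c x"
proof (rule DERIV_neg_imp_decreasing_open[OF assms(2) _ continuous_on_psi])
  fix z
  assume "x < z" "z < y"
  then have "c * x < c * z"
    using c_gt_1 by simp
  moreover have "c - 1 \<le> c * x"
    using assms(1) c_gt_1 by (simp add: field_simps)
  ultimately have "c * (1 - z) - 1 < 0"
    by (simp add: right_diff_distrib)
  then have "exp (c * z) * (c * (1 - z) - 1) < 0"
    by (simp add: mult_pos_neg)
  then show "\<exists>d. (psi c has_real_derivative d) (at z) \<and> d < 0"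
    using psi_has_derivative by blast
qed

lemma psi_eq_1_bounds:
  assumes "0 < x" "psi c x = 1"
  shows "1 - 1 / c < x" "x < 1"
proof -
  show "1 - 1 / c < x"
    using psi_gt_1[OF assms(1)] assms(2) by force
  have "0 < exp (c * x) * (1 - x)"
    using assms(2) unfolding psi_def by simp
  then show "x < 1"
    by (simp add: zero_less_mult_iff)
qed

lemma ex1_psi_eq_1: "\<exists>!x. 0 < x \<and> psi c x = 1"
proof -
  have "0 < 1 - 1 / c"
    using c_gt_1 by simp
  have "\<exists>a. 1 - 1 / c \<le> a \<and> a \<le> 1 \<and> psi c a = 1"
  proof (rule IVT2'[OF _ _ _ continuous_on_psi])
    show "1 \<le> psi c (1 - 1 / c)"
      using psi_gt_1[OF \<open>0 < 1 - 1 / c\<close>] by simp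
  qed (use c_gt_1 in \<open>simp_all add: psi_def\<close>)
  then obtain a where a: "1 - 1 / c \<le> a" "psi c a = 1"
    by blast
  have "x = a" if "0 < x" "psi c x = 1" for x
  proof -
    have "1 - 1 / c \<le> x"
      using psi_eq_1_bounds(1)[OF that] by simp
    then show ?thesis
      using psi_strict_antimono[of x a] psi_strict_antimono[of a x] a that(2)
      by (cases x a rule: linorder_cases) auto
  qed
  moreover have "0 < a"
    using a(1) \<open>0 < 1 - 1 / c\<close> by linarith
  ultimately show ?thesis
    using a(2) by blast
qed

lemma alpha_root_pos: "0 < alpha_root c"
  and psi_alpha_root: "psi c (alpha_root c) = 1"
  using theI'[OF ex1_psi_eq_1] unfolding alpha_root_def psi_def by auto

lemma alpha_root_less_iff:
  assumes "0 < x"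
  shows "alpha_root c < x \<longleftrightarrow> psi c x < 1"
proof
  assume "alpha_root c < x"
  moreover have "1 - 1 / c \<le> alpha_root c"
    using psi_eq_1_bounds(1) alpha_root_pos psi_alpha_root by fastforce
  ultimately show "psi c x < 1"
    using psi_strict_antimono alpha_root_pos psi_alpha_root by fastforce
next
  assume "psi c x < 1"
  then have "1 - 1 / c \<le> x"
    using psi_gt_1[OF assms] by fastforce
  then show "alpha_root c < x"
    using psi_strict_antimono[of x "alpha_root c"] alpha_root_pos psi_alpha_root \<open>psi c x < 1\<close>
    by (metis not_less_iff_gr_or_eq order_less_irrefl)
qed

lemma alpha_root_gt: "1 - 1 / c^2 < alpha_root c"
proof -
  define x where "x = 1 - 1 / c^2"
  have "0 < x"
    unfolding x_def using c_gt_1 by (simp add: power_gt1)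
  have "c^2 = exp (2 * ln c)"
    using c_gt_1 exp_of_nat_mult[of 2 "ln c"] by simp
  also have "\<dots> < exp (c - 1 / c)"
    using ln_less_half_diff_inverse[OF c_gt_1] by simp
  finally have "1 < exp (c - 1 / c) / c^2"
    using c_gt_1 by simp
  also have "exp (c - 1 / c) / c^2 = psi c x"
    unfolding psi_def x_def using c_gt_1 by (simp add: field_simps power2_eq_square)
  finally have "\<not> alpha_root c < x" "alpha_root c \<noteq> x"
    using alpha_root_less_iff[OF \<open>0 < x\<close>] alpha_root_pos psi_alpha_root by auto
  then show ?thesis
    unfolding x_def by linarith
qed

end

definition step_numerator :: "nat \<Rightarrow> nat \<Rightarrow> nat \<Rightarrow> real" where
  "step_numerator r l k = real k ^ l - (real k - real r + 1) * (real k + 1) ^ (l - 1)"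

lemma f_rl_Suc_diff:
  assumes "1 \<le> r" "r \<le> k" "1 \<le> l"
  obtains w where "0 < w" "f_rl r l (Suc k) - f_rl r l k = step_numerator r l k * w"
proof
  define P where "P = (\<Prod>i=1..r-1. real k - real i)"
  define t where "t = real k - real r + 1"
  define a where "a = real k ^ (l - 1)"
  define b where "b = (real k + 1) ^ (l - 1)"
  have "0 < P"
    unfolding P_def using assms by (intro prod_pos) auto
  then have pos: "0 < P" "0 < t" "0 < a" "0 < b"
    unfolding t_def a_def b_def using assms by auto
  have "real k - real (r - 1) = t"
    unfolding t_def using assms by (simp add: of_nat_diff)
  then have "(\<Prod>i=1..r-1. (real k + 1) - real i) * t = real k * P"
    using prod_diff_shift[of "real k" "r - 1"] unfolding P_def by simp
  then have f_Suc: "f_rl r l (Suc k) = real k * P / (t * b)"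
    unfolding f_rl_def b_def using pos by (simp add: add.commute eq_divide_eq)
  have f: "f_rl r l k = P / a"
    unfolding f_rl_def P_def a_def by simp
  have Q: "step_numerator r l k = real k * a - t * b"
    unfolding step_numerator_def a_def t_def b_def using assms by (simp add: power_eq_if)
  show "f_rl r l (Suc k) - f_rl r l k = step_numerator r l k * (P / (t * a * b))"
    unfolding f_Suc f Q using pos by (simp add: field_simps)
  show "0 < P / (t * a * b)"
    using pos by simp
qed

lemma step_numerator_nonzero:
  assumes "2 \<le> r" "r \<le> k" "1 \<le> l"
  shows "step_numerator r l k \<noteq> 0"
proof
  assume "step_numerator r l k = 0"
  then have "real k ^ l = (real k - real r + 1) * (real k + 1) ^ (l - 1)"
    unfolding step_numerator_def by simp
  moreover have "real (k - r + 1) = real k - real r + 1"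
    using assms by (simp add: of_nat_diff)
  ultimately have "real (k ^ l) = real ((k - r + 1) * (k + 1) ^ (l - 1))"
    unfolding of_nat_mult of_nat_power by (simp only: of_nat_add of_nat_1)
  then have "k ^ l = (k - r + 1) * (k + 1) ^ (l - 1)"
    by (simp only: of_nat_eq_iff)
  moreover have "k dvd k ^ l"
    using assms by (intro dvd_power) auto
  ultimately have "k dvd (k - r + 1) * (k + 1) ^ (l - 1)"
    by simp
  moreover have "coprime k ((k + 1) ^ (l - 1))"
    by simp
  ultimately have "k dvd k - r + 1"
    using coprime_dvd_mult_left_iff by blast
  moreover have "0 < k - r + 1" "k - r + 1 < k"
    using assms by linarith+
  ultimately show False
    using nat_dvd_not_less[of "k - r + 1" k] by simp
qed

lemma log_step_neg_iff:
  assumes "1 \<le> r" "r \<le> k" "1 \<le> l"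
  shows "log_step (real r) (real l) (real k) < 0 \<longleftrightarrow> step_numerator r l k < 0"
proof -
  define A where "A = real k ^ l"
  define B where "B = (real k - real r + 1) * (real k + 1) ^ (l - 1)"
  have "0 < real k - real r + 1"
    using assms by simp
  then have "0 < A" "0 < B"
    unfolding A_def B_def using assms by simp_all
  moreover have "log_step (real r) (real l) (real k) = ln A - ln B"
    unfolding log_step_def A_def B_def using \<open>0 < real k - real r + 1\<close> assms
    by (simp add: ln_realpow ln_mult of_nat_diff)
  moreover have "step_numerator r l k = A - B"
    unfolding step_numerator_def A_def B_def ..
  ultimately show ?thesis
    by simp
qed

lemma step_numerator_neg_mono:
  assumes "1 < r" "r < l" "r \<le> k" "k \<le> j" "step_numerator r l k < 0"
  shows "step_numerator r l j < 0"
proof -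
  have r_l: "1 < real r" "real r < real l"
    using assms by simp_all
  have "log_step (real r) (real l) (real j) < 0"
  proof (cases "real j \<le> turning_point (real r) (real l)")
    case True
    then have "log_step (real r) (real l) (real j) \<le> log_step (real r) (real l) (real k)"
      using assms by (intro log_step_antimono[OF r_l]) auto
    also have "\<dots> < 0"
      using assms log_step_neg_iff[of r k l] by simp
    finally show ?thesis .
  next
    case False
    then show ?thesis
      by (intro log_step_neg[OF r_l]) simp
  qed
  then show ?thesis
    using assms log_step_neg_iff[of r j l] by simp
qed

lemma ex_step_numerator_neg:
  assumes "1 < r" "r < l"
  shows "\<exists>k. r \<le> k \<and> step_numerator r l k < 0"
proof
  have r_l: "1 < real r" "real r < real l"
    using assms by simp_all
  define k where "k = max r (nat \<lceil>turning_point (real r) (real l)\<rceil>)"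
  have "log_step (real r) (real l) (real k) < 0"
    unfolding k_def by (intro log_step_neg[OF r_l]) linarith
  then show "r \<le> k \<and> step_numerator r l k < 0"
    using log_step_neg_iff[of r k l] assms unfolding k_def by simp
qed

lemma m_rl_first_descent:
  assumes "2 \<le> r" "r < l"
  shows m_rl_ge: "r \<le> m_rl r l"
    and step_numerator_m_rl_neg: "step_numerator r l (m_rl r l) < 0"
    and step_numerator_before_m_rl_pos: "\<And>j. r \<le> j \<Longrightarrow> j < m_rl r l \<Longrightarrow> 0 < step_numerator r l j"
proof -
  define p where "p = (LEAST k. r \<le> k \<and> step_numerator r l k < 0)"
  have "\<exists>k. r \<le> k \<and> step_numerator r l k < 0"
    using assms by (intro ex_step_numerator_neg) auto
  then have p: "r \<le> p" "step_numerator r l p < 0"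
    unfolding p_def by (metis (mono_tags, lifting) LeastI_ex)+
  have before_p: "0 < step_numerator r l j" if "r \<le> j" "j < p" for j
    using not_less_Least[of j "\<lambda>k. r \<le> k \<and> step_numerator r l k < 0", folded p_def]
      step_numerator_nonzero[of r j l] that assms by force
  have from_p: "step_numerator r l j < 0" if "p \<le> j" for j
    using step_numerator_neg_mono[of r l p j] p that assms by simp
  have "1 \<le> r" "1 \<le> l"
    using assms by simp_all
  then have step: "\<exists>w>0. f_rl r l (Suc i) - f_rl r l i = step_numerator r l i * w" if "r \<le> i" for i
    using f_rl_Suc_diff[of r i l] that by blast
  have "m_rl r l = p"
    unfolding m_rl_def
  proof (rule the_argmax_unimodal[OF p(1)])
    fix i
    assume "r \<le> i" "i < p"
    then show "f_rl r l i < f_rl r l (Suc i)"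
      using step[of i] before_p[of i] by (auto simp: algebra_simps)
  next
    fix i
    assume "p \<le> i"
    then show "f_rl r l (Suc i) < f_rl r l i"
      using step[of i] from_p[of i] p(1) by (auto simp: algebra_simps mult_pos_neg)
  qed
  then show "r \<le> m_rl r l" "step_numerator r l (m_rl r l) < 0"
    "\<And>j. r \<le> j \<Longrightarrow> j < m_rl r l \<Longrightarrow> 0 < step_numerator r l j"
    using p before_p by simp_all
qed

lemma m_rl_gt_half_turning_point:
  assumes "2 \<le> r" "r < l"
  shows "real l * (real r - 1) / (2 * (real l - real r)) < real (m_rl r l)"
proof -
  have "log_step (real r) (real l) (real (m_rl r l)) < 0"
    using m_rl_ge[OF assms] step_numerator_m_rl_neg[OF assms] log_step_neg_iff[of r "m_rl r l" l] assms
    by simp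
  then have "turning_point (real r) (real l) / 2 < real (m_rl r l)"
    using m_rl_ge[OF assms] assms
    by (intro half_turning_point_less) auto
  moreover have "turning_point (real r) (real l) / 2 = real l * (real r - 1) / (2 * (real l - real r))"
    unfolding turning_point_def by (simp add: mult.commute)
  ultimately show ?thesis
    by simp
qed

lemma one_minus_inverse_power_m_rl_gt:
  assumes "2 \<le> r" "r < l"
  defines "m \<equiv> real (m_rl r l)"
  shows "1 - real r / m < (1 - 1 / m) ^ l"
proof (cases "r < m_rl r l")
  case True
  have "0 < m"
    unfolding m_def using True by simp
  have "0 < step_numerator r l (m_rl r l - 1)"
    using step_numerator_before_m_rl_pos[OF assms(1,2)] True by simp
  then have "(m - real r) * m ^ (l - 1) < (m - 1) ^ l"
    unfolding step_numerator_def m_def using True by (simp add: of_nat_diff)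
  have "1 - real r / m = (m - real r) * m ^ (l - 1) / m ^ l"
  proof -
    have "m ^ l = m * m ^ (l - 1)"
      using assms(2) by (simp add: power_eq_if)
    then show ?thesis
      using \<open>0 < m\<close> by (simp add: field_simps)
  qed
  also have "\<dots> < (m - 1) ^ l / m ^ l"
    using \<open>(m - real r) * m ^ (l - 1) < (m - 1) ^ l\<close> \<open>0 < m\<close>
    by (intro divide_strict_right_mono) auto
  also have "\<dots> = (1 - 1 / m) ^ l"
    using \<open>0 < m\<close> by (simp add: power_divide[symmetric] diff_divide_distrib)
  finally show ?thesis .
next
  case False
  then have "m = real r"
    unfolding m_def using m_rl_ge[OF assms(1,2)] by simp
  then show ?thesis
    using assms(1) by simp
qed

lemma m_rl_less_quadratic:
  assumes "2 \<le> r" "r < l"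
  shows "real (m_rl r l) < real l * (real l - 1) / (2 * (real l - real r))"
proof -
  define m where "m = real (m_rl r l)"
  have "2 \<le> m"
    unfolding m_def using m_rl_ge[OF assms] assms(1) by simp
  then have "1 - real r * (1 / m) < 1 - real l * (1 / m) + real l * (real l - 1) / 2 * (1 / m)^2"
    using one_minus_inverse_power_m_rl_gt[OF assms, folded m_def]
      one_minus_power_le_second_order[of "1 / m" l]
    by simp
  then have "(real l - real r) * (1 / m) < real l * (real l - 1) / 2 * (1 / m)^2"
    unfolding left_diff_distrib by linarith
  then have "(real l - real r) * (1 / m) * m^2 < real l * (real l - 1) / 2 * (1 / m)^2 * m^2"
    using \<open>2 \<le> m\<close> by (intro mult_strict_right_mono) auto
  then have "(real l - real r) * m < real l * (real l - 1) / 2"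
    using \<open>2 \<le> m\<close> by (simp add: power2_eq_square)
  then show ?thesis
    unfolding m_def[symmetric] using assms(2) by (simp add: field_simps)
qed

lemma m_rl_less_div_alpha_root:
  assumes "2 \<le> r" "r < l"
  shows "real (m_rl r l) < real r / alpha_root (real l / real r)"
proof -
  define m where "m = real (m_rl r l)"
  define c where "c = real l / real r"
  have "2 \<le> m"
    unfolding m_def using m_rl_ge[OF assms] assms(1) by simp
  have "1 < c"
    unfolding c_def using assms by simp
  have "(1 - (real l / m) / real l) ^ l \<le> exp (- (real l / m))"
    using \<open>2 \<le> m\<close> assms by (intro exp_ge_one_minus_x_over_n_power_n) (auto simp: field_simps)
  then have "1 - real r / m < exp (- (real l / m))"
    using one_minus_inverse_power_m_rl_gt[OF assms, folded m_def] assms by simp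
  then have "psi c (real r / m) < 1"
    unfolding psi_def c_def using assms by (simp add: exp_minus field_simps)
  then have "alpha_root c < real r / m"
    using alpha_root_less_iff[OF \<open>1 < c\<close>] \<open>2 \<le> m\<close> assms by simp
  then show ?thesis
    unfolding m_def[symmetric] c_def[symmetric]
    using alpha_root_pos[OF \<open>1 < c\<close>] \<open>2 \<le> m\<close> by (simp add: field_simps)
qed

lemma div_alpha_root_less:
  fixes r l :: real
  assumes "0 < r" "r < l"
  shows "r / alpha_root (l / r) < r * l^2 / (l^2 - r^2)"
proof -
  have c: "1 < l / r"
    using assms by simp
  have "0 < 1 - r^2 / l^2"
    using assms by (simp add: power_strict_mono)
  moreover have "1 - r^2 / l^2 < alpha_root (l / r)"
    using alpha_root_gt[OF c] by (simp add: power_divide)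
  moreover have "0 < alpha_root (l / r)"
    using alpha_root_pos[OF c] .
  ultimately have "r / alpha_root (l / r) < r / (1 - r^2 / l^2)"
    using assms by (intro divide_strict_left_mono) auto
  then show ?thesis
    using assms by (simp add: field_simps)
qed

theorem lemma4p2:
  fixes r l :: nat
  assumes "2 \<le> r" and "r < l"
  defines "m \<equiv> real (m_rl r l)"
  defines "\<alpha> \<equiv> alpha_root (real l / real r)"
  shows "m > max (real l * (real r - 1) / (2 * (real l - real r))) (real r - 1)
       \<and> m < min (real l * (real l - 1) / (2 * (real l - real r))) (real r / \<alpha>)
       \<and> (\<exists>!x::real. x > 0 \<and> exp ((real l / real r) * x) * (1 - x) = 1)
       \<and> 1 - (real r)^2 / (real l)^2 < \<alpha> \<and> \<alpha> < 1
       \<and> m < real r * (real l)^2 / ((real l)^2 - (real r)^2)"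
proof -
  have c: "1 < real l / real r"
    using assms by simp
  have "1 - (real r)^2 / (real l)^2 < \<alpha>"
    using alpha_root_gt[OF c] unfolding \<alpha>_def by (simp add: power_divide)
  moreover have "\<alpha> < 1"
    using psi_eq_1_bounds(2)[OF c alpha_root_pos[OF c] psi_alpha_root[OF c]] unfolding \<alpha>_def .
  moreover have "m < real r / \<alpha>"
    using m_rl_less_div_alpha_root[OF assms(1,2)] unfolding m_def \<alpha>_def .
  moreover have "real r / \<alpha> < real r * (real l)^2 / ((real l)^2 - (real r)^2)"
    using div_alpha_root_less[of "real r" "real l"] assms unfolding \<alpha>_def by simp
  moreover have "real r - 1 < m"
    using m_rl_ge[OF assms(1,2)] unfolding m_def by simp
  ultimately show ?thesis
    using m_rl_gt_half_turning_point[OF assms(1,2)] m_rl_less_quadratic[OF assms(1,2)]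
      ex1_psi_eq_1[OF c]
    unfolding m_def[symmetric] psi_def by auto
qed

end
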